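(* Let $\ell\ge 2$ be an integer, let $Q_\ell$ be the $\ell$-dimensional hypercube graph (vertex set $\{0,1\}^\ell$, two vertices adjacent iff they differ in exactly one coordinate), and fix a proper edge coloring of $Q_\ell$ with $\ell$ colors $C_1,\dots,C_\ell$, so that every color class $E_j$ consists of $2^{\ell-1}$ edges. Let $\epsilon>0$ and consider the Bounded Color Matching instance on $Q_\ell$ with these color classes and color bounds $w_j=2(1-\epsilon)$ for all $j\in[\ell]$. Let $\psi$ be a positive integer and define the vector $\mathbf{y}$ indexed by subsets $I$ of the edge set $E=E(Q_\ell)$ by $$y_\emptyset=1,\qquad y_{\{e\}}=\rho:=\frac{1-\epsilon}{2^{\ell-2}+\psi(1-\epsilon)}\ \ \forall e\in E,\qquad y_I=0\ \ \forall I\subseteq E,\ |I|\ge 2.$$ Then, for any $\psi=o(2^{\ell-2})$, the vector $\mathbf{y}$ is feasible for the $\psi$-th level of the Sherali–Adams hierarchy applied to the natural LP relaxation $\mathcal{M}_c$ of this instance.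
   Context: Bounded Color Matching (BCM): given a simple undirected graph $G=(V,E)$ whose edge set is partitioned into color classes $E_1\cup\dots\cup E_k$, with bounds $w_j\ge 1$ (not necessarily integral), find a matching $M$ with $|M\cap E_j|\le w_j$ for all $j$ maximizing the total profit. Its natural LP relaxation is $\mathcal{M}_c=\{x\in[0,1]^E:\ \sum_{e\in\delta(v)}x_e\le 1\ \forall v\in V,\ \sum_{e\in E_j}x_e\le w_j\ \forall j\}$, where $\delta(v)$ is the set of edges incident to $v$. Sherali–Adams hierarchy: for a polytope $F_0=\{x\in[0,1]^n: a_i^Tx\le b_i,\ i\in[m]\}$ (the box constraints $x_j\ge 0$, $1-x_j\ge 0$ counted among its constraints), the level-$\psi$ lifted system has variables $y_Z$ for $Z\subseteq[n]$ with $y_\emptyset=1$, and for every pair of disjoint sets $\Gamma,\Delta\subseteq[n]$ with $|\Gamma|+|\Delta|\le\psi$ contains (i) for each constraint $b_i-a_i^Tx\ge 0$ the constraint $\sum_{H\subseteq\Delta}(-1)^{|H|}\big(b_i\,y_{\Gamma\cup H}-\sum_{j}a_{ij}\,y_{\Gamma\cup H\cup\{j\}}\big)\ge 0$ (this is the linearization of $(b_i-a_i^Tx)\prod_{\gamma\in\Gamma}x_\gamma\prod_{\delta\in\Delta}(1-x_\delta)\ge0$ using $x_i^2=x_i$ and replacing $\prod_{\zeta\in Z}x_\zeta$ by $y_Z$), and (ii) $\sum_{H\subseteq\Delta}(-1)^{|H|}y_{\Gamma\cup H}\ge 0$. A vector $\mathbf{y}$ is feasible for level $\psi$ if it satisfies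 all these constraints; the level-$\psi$ relaxation $F_\psi$ is the projection $\{x: \exists\, \mathbf{y}\text{ feasible},\ y_{\{i\}}=x_i\ \forall i\}$. *)

theory Defs
  imports Main "HOL-Library.Landau_Symbols"
begin

definition hc_vertices :: "nat \<Rightarrow> bool list set" where
  "hc_vertices l = {xs. length xs = l}"

definition hc_edges :: "nat \<Rightarrow> bool list set set" where
  "hc_edges l = {{u, v} | u v. u \<in> hc_vertices l \<and> v \<in> hc_vertices l
                    \<and> card {i. i < l \<and> u ! i \<noteq> v ! i} = 1}"

definition incident_edges :: "'v set set \<Rightarrow> 'v \<Rightarrow> 'v set set" where
  "incident_edges E v = {e \<in> E. v \<in> e}"

text \<open>Proper edge coloring of Q_l with the l colors 0,...,l-1 (standing for C_1..C_l):
  edges sharing an endpoint receive different colors.\<close>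
definition proper_edge_coloring :: "nat \<Rightarrow> (bool list set \<Rightarrow> nat) \<Rightarrow> bool" where
  "proper_edge_coloring l c \<longleftrightarrow>
     (\<forall>e \<in> hc_edges l. c e < l) \<and>
     (\<forall>e \<in> hc_edges l. \<forall>f \<in> hc_edges l. e \<noteq> f \<and> e \<inter> f \<noteq> {} \<longrightarrow> c e \<noteq> c f)"

text \<open>A constraint (a, b) stands for  b - a^T x \<ge> 0.\<close>

definition box_constraints :: "'a set \<Rightarrow> (('a \<Rightarrow> real) \<times> real) set" where
  "box_constraints N =
     {((\<lambda>i. if i = j then -1 else 0), 0) | j. j \<in> N} \<union>
     {((\<lambda>i. if i = j then 1 else 0), 1) | j. j \<in> N}"

definition bcm_constraints ::
  "'v set \<Rightarrow> 'v set set \<Rightarrow> 'c set \<Rightarrow> ('v set \<Rightarrow> 'c) \<Rightarrow> ('c \<Rightarrow> real)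
     \<Rightarrow> (('v set \<Rightarrow> real) \<times> real) set" where
  "bcm_constraints V E J col w =
     {((\<lambda>e. if e \<in> incident_edges E v then 1 else 0), 1) | v. v \<in> V} \<union>
     {((\<lambda>e. if e \<in> E \<and> col e = j then 1 else 0), w j) | j. j \<in> J} \<union>
     box_constraints E"

definition SA_feasible ::
  "'a set \<Rightarrow> (('a \<Rightarrow> real) \<times> real) set \<Rightarrow> nat \<Rightarrow> ('a set \<Rightarrow> real) \<Rightarrow> bool" where
  "SA_feasible N cons psi y \<longleftrightarrow>
     y {} = 1 \<and>
     (\<forall>\<Gamma> \<Delta>. \<Gamma> \<subseteq> N \<and> \<Delta> \<subseteq> N \<and> \<Gamma> \<inter> \<Delta> = {} \<and> card \<Gamma> + card \<Delta> \<le> psi \<longrightarrow>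
        (\<forall>(a, b) \<in> cons.
           (\<Sum>H \<in> Pow \<Delta>. (-1) ^ card H *
              (b * y (\<Gamma> \<union> H) - (\<Sum>j \<in> N. a j * y (\<Gamma> \<union> H \<union> {j})))) \<ge> 0) \<and>
        (\<Sum>H \<in> Pow \<Delta>. (-1) ^ card H * y (\<Gamma> \<union> H)) \<ge> 0)"

definition sa_vector :: "real \<Rightarrow> 'a set \<Rightarrow> real" where
  "sa_vector rho I = (if I = {} then 1 else if card I = 1 then rho else 0)"

end

theory Submission
  imports Defs
begin

text \<open>Because \<open>y\<close> vanishes on all sets of size at least two, the lifted constraint
  indexed by \<open>(\<Gamma>, \<Delta>)\<close> collapses: it is \<open>0\<close> if \<open>|\<Gamma>| \<ge> 2\<close>, it is
  \<open>\<rho> (b - a g)\<close> if \<open>\<Gamma> = {g}\<close>, and it is \<open>b (1 - \<rho> |\<Delta>|) - \<rho> \<Sum>j\<notin>\<Delta>. a j\<close> if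
  \<open>\<Gamma> = {}\<close>. Hence it suffices that \<open>\<rho> \<Sum>j. max (a j) 0 \<le> b (1 - \<rho> \<psi>)\<close> for every
  constraint. Writing \<open>t = 1 - \<epsilon>\<close> and \<open>q = 2^(\<ell>-2)\<close>, so that \<open>\<rho> = t / (q + \<psi> t)\<close>,
  this becomes \<open>t \<Sum>j. max (a j) 0 \<le> b q\<close>. For a vertex constraint it reads
  \<open>t \<ell> \<le> q\<close>, true once \<open>\<ell> \<ge> 4\<close>; for a colour constraint it reads
  \<open>t 2^(\<ell>-1) \<le> 2 t q\<close>, an equality.\<close>

text \<open>The linearization of \<open>y\<^sub>X \<Prod>\<delta>\<in>\<Delta>. (1 - x \<delta>)\<close>.\<close>
definition sa_lift :: "('a set \<Rightarrow> real) \<Rightarrow> 'a set \<Rightarrow> 'a set \<Rightarrow> real" where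
  "sa_lift y \<Delta> X = (\<Sum>H\<in>Pow \<Delta>. (-1) ^ card H * y (X \<union> H))"

lemma sa_lift_constraint:
  "(\<Sum>H\<in>Pow \<Delta>. (-1) ^ card H * (b * y (\<Gamma> \<union> H) - (\<Sum>j\<in>N. a j * y (\<Gamma> \<union> H \<union> {j}))))
     = b * sa_lift y \<Delta> \<Gamma> - (\<Sum>j\<in>N. a j * sa_lift y \<Delta> (insert j \<Gamma>))"
proof -
  have "(\<Sum>H\<in>Pow \<Delta>. (-1) ^ card H * (\<Sum>j\<in>N. a j * y (\<Gamma> \<union> H \<union> {j})))
      = (\<Sum>j\<in>N. a j * sa_lift y \<Delta> (insert j \<Gamma>))"
    unfolding sa_lift_def sum_distrib_left
    by (subst sum.swap) (auto intro!: sum.cong simp: ac_simps insert_commute)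
  then show ?thesis
    by (simp add: sa_lift_def right_diff_distrib sum_subtractf sum_distrib_left ac_simps)
qed

lemma sum_Pow_eq_empty_plus_singletons:
  fixes g :: "'a set \<Rightarrow> 'b::comm_monoid_add"
  assumes "finite D" and "\<And>H. H \<subseteq> D \<Longrightarrow> 2 \<le> card H \<Longrightarrow> g H = 0"
  shows "(\<Sum>H\<in>Pow D. g H) = g {} + (\<Sum>h\<in>D. g {h})"
proof -
  let ?S = "insert {} ((\<lambda>h. {h}) ` D)"
  have "(\<Sum>H\<in>Pow D. g H) = (\<Sum>H\<in>?S. g H)"
  proof (rule sum.mono_neutral_right)
    show "\<forall>H\<in>Pow D - ?S. g H = 0"
    proof
      fix H assume H: "H \<in> Pow D - ?S"
      then have "finite H" "H \<noteq> {}" "card H \<noteq> 1"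
        using assms(1) finite_subset by (auto simp: card_1_singleton_iff)
      then have "2 \<le> card H" by (cases "card H") auto
      with H assms(2) show "g H = 0" by auto
    qed
  qed (use assms(1) in auto)
  also have "\<dots> = g {} + (\<Sum>h\<in>D. g {h})"
    using assms(1) by (subst sum.insert) (auto simp: sum.reindex inj_on_def)
  finally show ?thesis .
qed

lemma sa_vector_Un_card_ge2:
  assumes "finite (X \<union> Y)" "2 \<le> card X"
  shows "sa_vector \<rho> (X \<union> Y) = 0"
proof -
  have "card X \<le> card (X \<union> Y)"
    using assms(1) by (intro card_mono) auto
  with assms(2) show ?thesis
    by (auto simp: sa_vector_def)
qed

lemma sa_lift_sa_vector_empty:
  assumes "finite \<Delta>"
  shows "sa_lift (sa_vector \<rho>) \<Delta> {} = 1 - \<rho> * card \<Delta>"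
  unfolding sa_lift_def
  by (subst sum_Pow_eq_empty_plus_singletons)
     (use assms finite_subset in \<open>auto simp: sa_vector_def\<close>)

lemma sa_lift_sa_vector_singleton:
  assumes "finite \<Delta>"
  shows "sa_lift (sa_vector \<rho>) \<Delta> {g} = (if g \<in> \<Delta> then 0 else \<rho>)"
proof -
  have "sa_vector \<rho> ({g} \<union> H) = 0" if "H \<subseteq> \<Delta>" "2 \<le> card H" for H
    using sa_vector_Un_card_ge2[of H "{g}" \<rho>] that assms by (simp add: Un_commute finite_subset)
  then have "sa_lift (sa_vector \<rho>) \<Delta> {g} = \<rho> - (\<Sum>h\<in>\<Delta>. sa_vector \<rho> {g, h})"
    unfolding sa_lift_def
    by (subst sum_Pow_eq_empty_plus_singletons) (auto simp: assms sa_vector_def sum_negf insert_commute)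
  also have "(\<Sum>h\<in>\<Delta>. sa_vector \<rho> {g, h}) = (\<Sum>h\<in>\<Delta>. if h = g then \<rho> else 0)"
    by (rule sum.cong) (auto simp: sa_vector_def)
  finally show ?thesis
    using assms by (simp add: sum.delta')
qed

lemma sa_lift_sa_vector_card_ge2:
  assumes "finite X" "finite \<Delta>" "2 \<le> card X"
  shows "sa_lift (sa_vector \<rho>) \<Delta> X = 0"
  unfolding sa_lift_def
  by (rule sum.neutral) (use assms finite_subset in \<open>auto intro!: sa_vector_Un_card_ge2\<close>)

lemma SA_feasible_sa_vector:
  fixes N :: "'a set" and \<rho> :: real
  assumes fin: "finite N" and \<rho>_nonneg: "0 \<le> \<rho>" and \<rho>_psi: "\<rho> * psi \<le> 1"
    and cons: "\<And>a b. (a, b) \<in> cons \<Longrightarrow>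
       0 \<le> b \<and> (\<forall>j\<in>N. a j \<le> b) \<and> \<rho> * (\<Sum>j\<in>N. max (a j) 0) \<le> b * (1 - \<rho> * psi)"
  shows "SA_feasible N cons psi (sa_vector \<rho>)"
  unfolding SA_feasible_def sa_lift_constraint sa_lift_def[symmetric]
proof (intro conjI allI impI)
  show "sa_vector \<rho> {} = 1" by (simp add: sa_vector_def)
  fix \<Gamma> \<Delta> :: "'a set"
  assume "\<Gamma> \<subseteq> N \<and> \<Delta> \<subseteq> N \<and> \<Gamma> \<inter> \<Delta> = {} \<and> card \<Gamma> + card \<Delta> \<le> psi"
  then have \<Gamma>: "\<Gamma> \<subseteq> N" "finite \<Gamma>" and \<Delta>: "\<Delta> \<subseteq> N" "finite \<Delta>"
    and disj: "\<Gamma> \<inter> \<Delta> = {}" and size: "card \<Gamma> + card \<Delta> \<le> psi"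
    using fin finite_subset by auto
  let ?L = "sa_lift (sa_vector \<rho>) \<Delta>"
  consider "\<Gamma> = {}" | g where "\<Gamma> = {g}" | "2 \<le> card \<Gamma>"
    using \<open>finite \<Gamma>\<close> by (metis card_1_singleton_iff card_0_eq less_2_cases not_less)
  then have "(\<forall>(a, b)\<in>cons. 0 \<le> b * ?L \<Gamma> - (\<Sum>j\<in>N. a j * ?L (insert j \<Gamma>))) \<and> 0 \<le> ?L \<Gamma>"
  proof cases
    case 1
    have \<rho>_\<Delta>: "\<rho> * card \<Delta> \<le> \<rho> * psi"
      using size 1 \<rho>_nonneg by (simp add: mult_left_mono)
    have "0 \<le> b * ?L {} - (\<Sum>j\<in>N. a j * ?L {j})" if ab: "(a, b) \<in> cons" for a b
    proof -
      have "(\<Sum>j\<in>N. a j * ?L {j}) = \<rho> * sum a (N - \<Delta>)"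
        using \<Delta> fin
        by (simp add: sa_lift_sa_vector_singleton if_distrib[of "times _"] sum.If_cases
            sum_distrib_left Diff_eq mult.commute)
      also have "\<dots> \<le> \<rho> * (\<Sum>j\<in>N. max (a j) 0)"
        using fin \<rho>_nonneg by (intro mult_left_mono order.trans[OF sum_mono sum_mono2]) auto
      also have "\<dots> \<le> b * (1 - \<rho> * card \<Delta>)"
        using cons[OF ab] \<rho>_\<Delta> by (smt (verit) mult_left_mono)
      finally show ?thesis using \<Delta> by (simp add: sa_lift_sa_vector_empty)
    qed
    moreover have "0 \<le> ?L {}"
      using \<Delta> \<rho>_\<Delta> \<rho>_psi by (simp add: sa_lift_sa_vector_empty)
    ultimately show ?thesis using 1 by auto
  next
    case (2 g)
    have g: "g \<in> N" "g \<notin> \<Delta>"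
      using 2 disj \<Gamma> by auto
    have "a j * ?L {j, g} = (if j = g then \<rho> * a g else 0)" for a j
      using g \<Delta> by (simp add: sa_lift_sa_vector_singleton sa_lift_sa_vector_card_ge2)
    then have "(\<Sum>j\<in>N. a j * ?L (insert j \<Gamma>)) = \<rho> * a g" for a
      using 2 g fin by simp
    moreover have "\<rho> * a g \<le> \<rho> * b" if "(a, b) \<in> cons" for a b
      using cons[OF that] g \<rho>_nonneg by (simp add: mult_left_mono)
    ultimately show ?thesis
      using 2 g \<Delta> \<rho>_nonneg by (auto simp: sa_lift_sa_vector_singleton mult.commute)
  next
    case 3
    then show ?thesis
      using \<Gamma> \<Delta> fin by (simp add: sa_lift_sa_vector_card_ge2 card_insert_le order.trans)
  qed
  then show "\<forall>(a, b)\<in>cons. 0 \<le> b * ?L \<Gamma> - (\<Sum>j\<in>N. a j * ?L (insert j \<Gamma>))" "0 \<le> ?L \<Gamma>"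
    by auto
qed

lemma finite_hc_vertices: "finite (hc_vertices l)"
  and card_hc_vertices: "card (hc_vertices l) = 2 ^ l"
proof -
  have "hc_vertices l = {xs. set xs \<subseteq> UNIV \<and> length xs = l}"
    by (simp add: hc_vertices_def)
  then show "finite (hc_vertices l)" "card (hc_vertices l) = 2 ^ l"
    by (simp_all only: finite_lists_length_eq[OF finite_UNIV] card_lists_length_eq[OF finite_UNIV])
       simp
qed

lemma hc_edges_subset_Pow: "hc_edges l \<subseteq> Pow (hc_vertices l)"
  by (auto simp: hc_edges_def)

lemma finite_hc_edges: "finite (hc_edges l)"
  using hc_edges_subset_Pow finite_hc_vertices by (metis finite_Pow_iff finite_subset)

lemma card_hc_edge:
  assumes "e \<in> hc_edges l"
  shows "card e = 2"
proof -
  obtain u v where "e = {u, v}" and "card {i. i < l \<and> u ! i \<noteq> v ! i} = 1"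
    using assms by (auto simp: hc_edges_def)
  then show ?thesis
    by (cases "u = v") auto
qed

lemma card_incident_edges_le:
  assumes "proper_edge_coloring l c"
  shows "card (incident_edges (hc_edges l) v) \<le> l"
proof -
  have "inj_on c (incident_edges (hc_edges l) v)"
    and "c ` incident_edges (hc_edges l) v \<subseteq> {..<l}"
    using assms unfolding proper_edge_coloring_def inj_on_def incident_edges_def by blast+
  then show ?thesis
    using card_inj_on_le[of c _ "{..<l}"] by simp
qed

lemma card_color_class_le:
  assumes "proper_edge_coloring l c"
  shows "2 * card {e \<in> hc_edges l. c e = j} \<le> 2 ^ l"
proof -
  let ?C = "{e \<in> hc_edges l. c e = j}"
  have "pairwise disjnt ?C"
    using assms unfolding proper_edge_coloring_def pairwise_def disjnt_def by blast
  moreover have "finite e" if "e \<in> ?C" for e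
    using card_hc_edge that by (metis (no_types, lifting) card.infinite mem_Collect_eq zero_neq_numeral)
  ultimately have "card (\<Union>?C) = (\<Sum>e\<in>?C. card e)"
    by (rule card_Union_disjoint)
  also have "\<dots> = (\<Sum>e\<in>?C. 2)"
    by (rule sum.cong) (auto simp: card_hc_edge)
  also have "\<dots> = 2 * card ?C"
    by simp
  moreover have "card (\<Union>?C) \<le> card (hc_vertices l)"
    using hc_edges_subset_Pow finite_hc_vertices by (intro card_mono) auto
  ultimately show ?thesis
    by (simp add: card_hc_vertices)
qed

lemma le_two_power_diff_two: "4 \<le> l \<Longrightarrow> l \<le> (2::nat) ^ (l - 2)"
proof (induction l rule: dec_induct)
  case (step n)
  then have "Suc n - 2 = Suc (n - 2)" by simp
  with step show ?case
    using one_le_power[of "2::nat" "n - 2"] by simp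
qed simp

lemma sum_max_indicator:
  assumes "finite E"
  shows "(\<Sum>e\<in>E. max (if P e then 1 else 0) (0::real)) = card {e\<in>E. P e}"
proof -
  have "(\<Sum>e\<in>E. max (if P e then 1 else 0) (0::real)) = (\<Sum>e\<in>E. if P e then 1 else 0)"
    by (rule sum.cong) auto
  also have "\<dots> = card {e\<in>E. P e}"
    using assms by (simp add: sum.inter_filter[symmetric])
  finally show ?thesis .
qed

lemma mult_le_one_minus_iff:
  fixes q t p X b :: real
  assumes "0 < q" "0 < t" "0 \<le> p"
  defines "\<rho> \<equiv> t / (q + p * t)"
  shows "\<rho> * X \<le> b * (1 - \<rho> * p) \<longleftrightarrow> t * X \<le> b * q"
proof -
  have pos: "0 < q + p * t" using assms by (simp add: add_pos_nonneg)
  then have "1 - \<rho> * p = q / (q + p * t)" by (simp add: \<rho>_def field_simps)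
  with pos show ?thesis by (simp add: \<rho>_def divide_le_cancel)
qed

lemma SA_feasible_hypercube_bcm:
  fixes \<epsilon> :: real and psi :: nat
  assumes "0 < \<epsilon>" and "2 * (1 - \<epsilon>) \<ge> 1" and "4 \<le> l"
    and col: "proper_edge_coloring l c"
  shows "SA_feasible (hc_edges l)
           (bcm_constraints (hc_vertices l) (hc_edges l) {..<l} c (\<lambda>j. 2 * (1 - \<epsilon>)))
           psi (sa_vector ((1 - \<epsilon>) / (2 ^ (l - 2) + real psi * (1 - \<epsilon>))))"
proof -
  define t where "t = 1 - \<epsilon>"
  define q :: real where "q = 2 ^ (l - 2)"
  let ?E = "hc_edges l"
  let ?\<rho> = "t / (q + real psi * t)"
  have t: "0 < t" "t \<le> 1" "1 \<le> 2 * t" and q: "1 \<le> q"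
    using assms by (auto simp: t_def q_def)
  have l_le_q: "real l \<le> q"
    using le_two_power_diff_two[OF \<open>4 \<le> l\<close>] unfolding q_def
    by (metis of_nat_le_iff of_nat_numeral of_nat_power)
  have two_pow_l: "(2::real) ^ l = 4 * q"
  proof -
    have "l = (l - 2) + 2" using \<open>4 \<le> l\<close> by simp
    then have "(2::real) ^ l = 2 ^ (l - 2) * 2 ^ 2" by (metis power_add)
    then show ?thesis unfolding q_def by simp
  qed
  have \<rho>_le_iff: "?\<rho> * X \<le> b * (1 - ?\<rho> * psi) \<longleftrightarrow> t * X \<le> b * q" for X b
    using mult_le_one_minus_iff[of q t "real psi" X b] t q by simp
  have "0 \<le> ?\<rho>" and "?\<rho> * psi \<le> 1"
    using t q \<rho>_le_iff[of 0 1] by simp_all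
  then show ?thesis
    unfolding t_def[symmetric] q_def[symmetric]
  proof (rule SA_feasible_sa_vector[OF finite_hc_edges])
    fix a b assume "(a, b) \<in> bcm_constraints (hc_vertices l) ?E {..<l} c (\<lambda>j. 2 * t)"
    then consider
        (vertex) v where "a = (\<lambda>e. if e \<in> incident_edges ?E v then 1 else 0)" "b = 1"
      | (color) j where "a = (\<lambda>e. if e \<in> ?E \<and> c e = j then 1 else 0)" "b = 2 * t"
      | (lower) j where "a = (\<lambda>i. if i = j then -1 else 0)" "b = 0" "j \<in> ?E"
      | (upper) j where "a = (\<lambda>i. if i = j then 1 else 0)" "b = 1" "j \<in> ?E"
      unfolding bcm_constraints_def box_constraints_def by blast
    then have "0 \<le> b \<and> (\<forall>j\<in>?E. a j \<le> b) \<and> t * (\<Sum>j\<in>?E. max (a j) 0) \<le> b * q"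
    proof cases
      case vertex
      have "(\<Sum>j\<in>?E. max (a j) 0) = card (incident_edges ?E v)"
        unfolding vertex sum_max_indicator[OF finite_hc_edges] by (simp add: incident_edges_def)
      moreover have "t * card (incident_edges ?E v) \<le> card (incident_edges ?E v)"
        by (rule mult_left_le_one_le) (use t in auto)
      moreover have "real (card (incident_edges ?E v)) \<le> q"
        using card_incident_edges_le[OF col, of v] l_le_q by linarith
      ultimately show ?thesis
        using vertex by auto
    next
      case color
      have "real (2 * card {e \<in> ?E. c e = j}) \<le> real (2 ^ l)"
        using card_color_class_le[OF col, of j] by (simp only: of_nat_le_iff)
      then have "2 * real (card {e \<in> ?E. c e = j}) \<le> 4 * q"
        using two_pow_l by simp
      then have "(\<Sum>j\<in>?E. max (a j) 0) \<le> 2 * q"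
        unfolding color sum_max_indicator[OF finite_hc_edges] by simp
      then show ?thesis
        using color t by (simp add: mult_left_mono)
    next
      case lower
      then show ?thesis by simp
    next
      case upper
      then show ?thesis
        using t q by (simp add: finite_hc_edges)
    qed
    then show "0 \<le> b \<and> (\<forall>j\<in>?E. a j \<le> b) \<and> ?\<rho> * (\<Sum>j\<in>?E. max (a j) 0) \<le> b * (1 - ?\<rho> * psi)"
      using \<rho>_le_iff by blast
  qed
qed

theorem mainTheorem1:
  fixes \<epsilon> :: real and \<psi> :: "nat \<Rightarrow> nat"
  assumes "0 < \<epsilon>" and "2 * (1 - \<epsilon>) \<ge> 1"
    and "\<forall>l. \<psi> l \<ge> 1"
    and "(\<lambda>l. real (\<psi> l)) \<in> o(\<lambda>l. 2 ^ (l - 2))"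
  shows "\<forall>\<^sub>F l in at_top. l \<ge> 2 \<and>
           (\<forall>c. proper_edge_coloring l c \<longrightarrow>
              SA_feasible (hc_edges l)
                (bcm_constraints (hc_vertices l) (hc_edges l) {..<l} c (\<lambda>j. 2 * (1 - \<epsilon>)))
                (\<psi> l)
                (sa_vector ((1 - \<epsilon>) / (2 ^ (l - 2) + real (\<psi> l) * (1 - \<epsilon>)))))"
proof -
  have "\<forall>\<^sub>F l in at_top. (4::nat) \<le> l"
    by (rule eventually_ge_at_top)
  then show ?thesis
    by (rule eventually_mono) (use SA_feasible_hypercube_bcm[OF assms(1,2)] in auto)
qed

end
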